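(* Let $V$ be a countable set, $\Lambda\subseteq\mathbb N_0$, and let $E$ be the set of unordered pairs $\{i,j\}$ of distinct elements of $V$ (edges of the complete graph on $V$). Consider a configuration process with generator $\mathcal L=\sum_{\{i,j\}\in E}\mathcal L_{i,j}$, where $$\mathcal L_{i,j}f(\eta)=c_{i,j}(\eta_i,\eta_j)[f(\eta^{i,j})-f(\eta)]+c_{j,i}(\eta_j,\eta_i)[f(\eta^{j,i})-f(\eta)],$$ with $\eta^{i,j}:=\eta-\delta_i+\delta_j$ and rate functions $c_{i,j}:\Lambda\times\Lambda\to\mathbb R$. Then $[\mathcal L_{i,j},\mathcal A]=0$ for all $\{i,j\}\in E$ if and only if there exist $\theta:E\to\mathbb R$ and $\alpha:V^2\to\mathbb R$ such that $$c_{i,j}(\kappa,m)=\kappa\big(\theta(\{i,j\})\,m+\alpha(i,j)\big)\qquad\text{for all } i\neq j,\ \kappa,m\in\Lambda.$$ As a consequence, the configuration process with rates of this form is consistent, i.e. $[\mathcal L,\mathcal A]=0$.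
   Context: Configurations are $\eta\in\Lambda^V$ with finitely many particles; $\delta_z$ is the configuration with a single particle at $z$. The annihilation operator acts on functions $f$ of configurations by $\mathcal Af(\eta)=\sum_{x\in V}a_xf(\eta)$, $a_xf(\eta)=\eta_xf(\eta-\delta_x)$ if $\eta_x\ge1$ and $0$ if $\eta_x=0$. $[\cdot,\cdot]$ is the commutator. *)

theory Defs
  imports Complex_Main "HOL-Library.Countable"
begin

text \<open>Configurations are represented as integer vectors so that shifted vectors
  such as eta - delta_i + delta_j are always defined; test functions f are
  real-valued functions on all integer vectors.\<close>

definition delta :: "'v \<Rightarrow> 'v \<Rightarrow> int" where
  "delta z = (\<lambda>x. if x = z then 1 else 0)"

definition is_config :: "nat set \<Rightarrow> ('v \<Rightarrow> int) \<Rightarrow> bool" where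
  "is_config \<Lambda> \<eta> \<longleftrightarrow> (\<forall>x. 0 \<le> \<eta> x \<and> nat (\<eta> x) \<in> \<Lambda>) \<and> finite {x. \<eta> x \<noteq> 0}"

type_synonym 'v obs = "('v \<Rightarrow> int) \<Rightarrow> real"
type_synonym 'v oper = "'v obs \<Rightarrow> 'v obs"

definition annih :: "'v \<Rightarrow> 'v oper" where
  "annih x f \<eta> = (if 1 \<le> \<eta> x then of_int (\<eta> x) * f (\<lambda>y. \<eta> y - delta x y) else 0)"

text \<open>Annihilation operator A = sum over x in V of a_x (only sites with
  eta_x >= 1 contribute, a finite set for finitely many particles).\<close>
definition Aop :: "'v oper" where
  "Aop f \<eta> = (\<Sum>x\<in>{x. 1 \<le> \<eta> x}. annih x f \<eta>)"

definition jump :: "'v \<Rightarrow> 'v \<Rightarrow> ('v \<Rightarrow> int) \<Rightarrow> ('v \<Rightarrow> int)" where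
  "jump i j \<eta> = (\<lambda>y. \<eta> y - delta i y + delta j y)"

text \<open>Edge generator L_{i,j} with rate functions c i j :: Lambda x Lambda -> R
  (given as total functions on nat x nat; only values on Lambda x Lambda matter).\<close>
definition Lij :: "('v \<Rightarrow> 'v \<Rightarrow> nat \<Rightarrow> nat \<Rightarrow> real) \<Rightarrow> 'v \<Rightarrow> 'v \<Rightarrow> 'v oper" where
  "Lij c i j f \<eta> =
     c i j (nat (\<eta> i)) (nat (\<eta> j)) * (f (jump i j \<eta>) - f \<eta>)
   + c j i (nat (\<eta> j)) (nat (\<eta> i)) * (f (jump j i \<eta>) - f \<eta>)"

definition Ledge :: "('v \<Rightarrow> 'v \<Rightarrow> nat \<Rightarrow> nat \<Rightarrow> real) \<Rightarrow> 'v set \<Rightarrow> 'v oper" where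
  "Ledge c e = (let p = (SOME p. fst p \<noteq> snd p \<and> e = {fst p, snd p}) in Lij c (fst p) (snd p))"

definition edges :: "'v set set" where
  "edges = {{i, j} | i j. i \<noteq> j}"

definition Lsum :: "('v \<Rightarrow> 'v \<Rightarrow> nat \<Rightarrow> nat \<Rightarrow> real) \<Rightarrow> 'v set set \<Rightarrow> 'v oper" where
  "Lsum c F f \<eta> = (\<Sum>e\<in>F. Ledge c e f \<eta>)"

definition commutes :: "nat set \<Rightarrow> 'v oper \<Rightarrow> 'v oper \<Rightarrow> bool" where
  "commutes \<Lambda> P Q \<longleftrightarrow> (\<forall>f \<eta>. is_config \<Lambda> \<eta> \<longrightarrow> P (Q f) \<eta> - Q (P f) \<eta> = 0)"

end

theory Submission
  imports Defs
begin

text \<open>For i \<noteq> j the edge generator L_ij commutes with every a_x, x \<notin> {i, j}, so [L_ij, A] f \<eta>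
  only involves a_i and a_j. With \<eta>_i = a and \<eta>_j = b it is a linear combination of the values of
  f at the four distinct configurations \<eta> - \<delta>_i, \<eta> - \<delta>_j, (\<eta> - \<delta>_i)^{i,j} and (\<eta> - \<delta>_j)^{j,i},
  so commutation amounts to the vanishing of four coefficients. The coefficient of
  f((\<eta> - \<delta>_i)^{i,j}) is (a - 1) c_ij(a, b) - a c_ij(a - 1, b); its vanishing makes c_ij(\<kappa>, m)
  linear in \<kappa>. The coefficient of f(\<eta> - \<delta>_i) then becomes a b times the difference between the
  increment of c_ij(1, -) at b and that of c_ji(1, -) at a, so all these increments equal one
  constant \<theta>_ij = \<theta>_ji.\<close>

lemma Aop_eq_sum_superset:
  assumes "finite T" "{x. 1 \<le> \<eta> x} \<subseteq> T"
  shows "Aop f \<eta> = (\<Sum>x\<in>T. annih x f \<eta>)"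
  unfolding Aop_def
  by (rule sum.mono_neutral_left) (use assms in \<open>auto simp: annih_def\<close>)

lemma annih_eq_nat:
  assumes "-1 \<le> \<eta> x"
  shows "annih x f \<eta> = real (nat (\<eta> x)) * f (\<lambda>y. \<eta> y - delta x y)"
  using assms by (auto simp: annih_def)

lemma Lij_sym: "Lij c j i = Lij c i j"
  by (auto simp: fun_eq_iff Lij_def)

lemma Lij_annih_off_edge:
  assumes "x \<noteq> i" "x \<noteq> j"
  shows "Lij c i j (annih x f) \<eta> = annih x (Lij c i j f) \<eta>"
proof -
  have "jump u v \<eta> x = \<eta> x" "(\<lambda>y. jump u v \<eta> y - delta x y) = jump u v (\<lambda>y. \<eta> y - delta x y)"
    if "u \<in> {i, j}" "v \<in> {i, j}" for u v
    using assms that by (auto simp: jump_def delta_def)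
  moreover have "delta x i = 0" "delta x j = 0"
    using assms by (auto simp: delta_def)
  ultimately show ?thesis
    by (simp add: Lij_def annih_def algebra_simps)
qed

lemma commutator_Lij_Aop_eq_endpoints:
  assumes "finite {x. 1 \<le> \<eta> x}" "i \<noteq> j"
  shows "Lij c i j (Aop f) \<eta> - Aop (Lij c i j f) \<eta> =
      (Lij c i j (annih i f) \<eta> - annih i (Lij c i j f) \<eta>)
    + (Lij c i j (annih j f) \<eta> - annih j (Lij c i j f) \<eta>)"
proof -
  define T where "T = {x. 1 \<le> \<eta> x} \<union> {i, j}"
  define D where "D x = Lij c i j (annih x f) \<eta> - annih x (Lij c i j f) \<eta>" for x
  have "finite T"
    using assms(1) by (simp add: T_def)
  have supp: "{x. 1 \<le> \<zeta> x} \<subseteq> T" if "\<zeta> \<in> {\<eta>, jump i j \<eta>, jump j i \<eta>}" for \<zeta>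
    using that by (auto simp: T_def jump_def delta_def)
  have "Lij c i j (Aop f) \<eta> - Aop (Lij c i j f) \<eta> = (\<Sum>x\<in>T. D x)"
    unfolding D_def Lij_def[of c i j "Aop f"]
    by (simp add: Aop_eq_sum_superset[OF \<open>finite T\<close> supp] Lij_def sum_subtractf
        sum.distrib sum_distrib_left right_diff_distrib)
  also have "\<dots> = (\<Sum>x\<in>T - {i, j}. D x) + (D i + D j)"
    using sum.subset_diff[of "{i, j}" T D] \<open>finite T\<close> assms(2) by (simp add: T_def)
  also have "(\<Sum>x\<in>T - {i, j}. D x) = 0"
    by (simp add: D_def Lij_annih_off_edge)
  finally show ?thesis
    by (simp add: D_def)
qed

text \<open>In [L_ij, A] f \<eta> with \<eta>_i = a and \<eta>_j = b, \<open>comm_coeff_jump (c i j) a b\<close> is the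
  coefficient of f((\<eta> - \<delta>_i)^{i,j}) and \<open>comm_coeff_annih (c i j) (c j i) a b\<close> that of
  f(\<eta> - \<delta>_i). Truncated subtraction is harmless: \<open>real (a - 1) = 0\<close> at a = 0 is the value of
  annih at occupation -1, and every other term with a - 1 or b - 1 carries a factor a or b.\<close>

definition comm_coeff_jump :: "(nat \<Rightarrow> nat \<Rightarrow> real) \<Rightarrow> nat \<Rightarrow> nat \<Rightarrow> real" where
  "comm_coeff_jump r a b = real (a - 1) * r a b - real a * r (a - 1) b"

definition comm_coeff_annih ::
    "(nat \<Rightarrow> nat \<Rightarrow> real) \<Rightarrow> (nat \<Rightarrow> nat \<Rightarrow> real) \<Rightarrow> nat \<Rightarrow> nat \<Rightarrow> real" where
  "comm_coeff_annih r s a b =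
     real (b + 1) * r a b - real b * r a (b - 1) - real a * (r a b + s b a - r (a - 1) b - s b (a - 1))"

lemma commutator_Lij_annih:
  assumes "i \<noteq> j" "\<eta> i = int a" "\<eta> j = int b"
  defines "\<xi> \<equiv> \<lambda>y. \<eta> y - delta i y"
  shows "Lij c i j (annih i f) \<eta> - annih i (Lij c i j f) \<eta> =
      comm_coeff_jump (c i j) a b * f (jump i j \<xi>)
    + (real (a + 1) * c j i b a - real a * c j i b (a - 1)) * f (jump j i \<xi>)
    - real a * (c i j a b + c j i b a - c i j (a - 1) b - c j i b (a - 1)) * f \<xi>"
proof -
  have at_sites: "jump i j \<eta> i = int a - 1" "jump j i \<eta> i = int a + 1" "\<xi> i = int a - 1"
    "\<xi> j = int b" "jump i j \<eta> j = int b + 1" "jump j i \<eta> j = int b - 1"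
    using assms by (auto simp: jump_def delta_def \<xi>_def)
  have shifts: "(\<lambda>y. jump u v \<eta> y - delta i y) = jump u v \<xi>" for u v
    by (auto simp: jump_def \<xi>_def)
  show ?thesis
    using assms(2,3)
    by (simp add: Lij_def annih_eq_nat at_sites shifts \<xi>_def[symmetric] comm_coeff_jump_def
        nat_diff_distrib' algebra_simps)
qed

lemma commutator_Lij_Aop:
  assumes "finite {x. 1 \<le> \<eta> x}" "i \<noteq> j" "\<eta> i = int a" "\<eta> j = int b"
  defines "\<xi> \<equiv> \<lambda>y. \<eta> y - delta i y" and "\<zeta> \<equiv> \<lambda>y. \<eta> y - delta j y"
  shows "Lij c i j (Aop f) \<eta> - Aop (Lij c i j f) \<eta> =
      comm_coeff_jump (c i j) a b * f (jump i j \<xi>) + comm_coeff_jump (c j i) b a * f (jump j i \<zeta>)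
    + comm_coeff_annih (c i j) (c j i) a b * f \<xi> + comm_coeff_annih (c j i) (c i j) b a * f \<zeta>"
proof -
  have "jump j i \<xi> = \<zeta>" "jump i j \<zeta> = \<xi>"
    by (auto simp: jump_def \<xi>_def \<zeta>_def)
  then show ?thesis
    using commutator_Lij_annih[of i j \<eta> a b c f] commutator_Lij_annih[of j i \<eta> b a c f] assms(2-4)
    by (simp add: commutator_Lij_Aop_eq_endpoints[OF assms(1,2)] Lij_sym[of c j i] \<xi>_def[symmetric]
        \<zeta>_def[symmetric] comm_coeff_annih_def algebra_simps)
qed

lemma coeffs_zero_if_combination_vanishes:
  assumes "distinct [p, q, r, s]"
    and "\<And>f. k\<^sub>1 * f p + k\<^sub>2 * f q + k\<^sub>3 * f r + k\<^sub>4 * f s = (0::real)"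
  shows "k\<^sub>1 = 0 \<and> k\<^sub>2 = 0 \<and> k\<^sub>3 = 0 \<and> k\<^sub>4 = 0"
  using assms(1) assms(2)[of "\<lambda>x. if x = p then 1 else 0"] assms(2)[of "\<lambda>x. if x = q then 1 else 0"]
    assms(2)[of "\<lambda>x. if x = r then 1 else 0"] assms(2)[of "\<lambda>x. if x = s then 1 else 0"]
  by auto

lemma comm_coeffs_vanish_if_commutes:
  assumes commutes: "commutes \<Lambda> (Lij c i j) Aop"
    and "0 \<in> \<Lambda>" "i \<noteq> j" "a \<in> \<Lambda>" "b \<in> \<Lambda>"
  shows "comm_coeff_jump (c i j) a b = 0 \<and> comm_coeff_jump (c j i) b a = 0
    \<and> comm_coeff_annih (c i j) (c j i) a b = 0 \<and> comm_coeff_annih (c j i) (c i j) b a = 0"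
proof -
  define \<eta> where "\<eta> y = (if y = i then int a else if y = j then int b else 0)" for y
  define \<xi> where "\<xi> y = \<eta> y - delta i y" for y
  define \<zeta> where "\<zeta> y = \<eta> y - delta j y" for y
  have "{x. \<eta> x \<noteq> 0} \<subseteq> {i, j}"
    by (auto simp: \<eta>_def)
  then have fin: "finite {x. \<eta> x \<noteq> 0}"
    by (rule finite_subset) simp
  then have "finite {x. 1 \<le> \<eta> x}"
    by (rule rev_finite_subset) auto
  moreover have "is_config \<Lambda> \<eta>"
    using fin assms(2,4,5) by (simp add: is_config_def \<eta>_def)
  moreover have "\<eta> i = int a" "\<eta> j = int b"
    using \<open>i \<noteq> j\<close> by (auto simp: \<eta>_def)
  ultimately have vanishes:
    "comm_coeff_jump (c i j) a b * f (jump i j \<xi>) + comm_coeff_jump (c j i) b a * f (jump j i \<zeta>)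
      + comm_coeff_annih (c i j) (c j i) a b * f \<xi> + comm_coeff_annih (c j i) (c i j) b a * f \<zeta> = 0"
    for f
    using commutes commutator_Lij_Aop[of \<eta> i j a b c f] \<open>i \<noteq> j\<close>
    by (simp add: commutes_def \<xi>_def[abs_def] \<zeta>_def[abs_def])
  have "jump i j \<xi> i = int a - 2" "jump j i \<zeta> i = int a + 1" "\<xi> i = int a - 1" "\<zeta> i = int a"
    using \<open>i \<noteq> j\<close> by (auto simp: jump_def delta_def \<xi>_def \<zeta>_def \<eta>_def)
  then have distinct: "distinct [jump i j \<xi>, jump j i \<zeta>, \<xi>, \<zeta>]"
    by (auto dest!: fun_cong[of _ _ i])
  show ?thesis
    by (rule coeffs_zero_if_combination_vanishes[OF distinct vanishes])
qed

lemma commutes_if_comm_coeffs_vanish: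
  assumes "i \<noteq> j"
    and coeffs: "\<And>a b. a \<in> \<Lambda> \<Longrightarrow> b \<in> \<Lambda> \<Longrightarrow>
      comm_coeff_jump (c i j) a b = 0 \<and> comm_coeff_jump (c j i) b a = 0
      \<and> comm_coeff_annih (c i j) (c j i) a b = 0 \<and> comm_coeff_annih (c j i) (c i j) b a = 0"
  shows "commutes \<Lambda> (Lij c i j) Aop"
  unfolding commutes_def
proof (intro allI impI)
  fix f \<eta> assume "is_config \<Lambda> (\<eta> :: 'a \<Rightarrow> int)"
  then have fin: "finite {x. 1 \<le> \<eta> x}" and at_i: "\<eta> i = int (nat (\<eta> i))"
    and at_j: "\<eta> j = int (nat (\<eta> j))" and "nat (\<eta> i) \<in> \<Lambda>" "nat (\<eta> j) \<in> \<Lambda>"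
    by (auto simp: is_config_def elim: rev_finite_subset)
  then show "Lij c i j (Aop f) \<eta> - Aop (Lij c i j f) \<eta> = 0"
    using coeffs by (simp add: commutator_Lij_Aop[OF fin assms(1) at_i at_j])
qed

lemma all_Lij_sym_iff_comm_coeffs_vanish:
  assumes "0 \<in> \<Lambda>"
  shows "(\<forall>i j. i \<noteq> j \<longrightarrow> commutes \<Lambda> (Lij c i j) Aop) \<longleftrightarrow>
    (\<forall>i j a b. i \<noteq> j \<longrightarrow> a \<in> \<Lambda> \<longrightarrow> b \<in> \<Lambda> \<longrightarrow>
      comm_coeff_jump (c i j) a b = 0 \<and> comm_coeff_annih (c i j) (c j i) a b = 0)"
  using comm_coeffs_vanish_if_commutes[OF _ assms, where c = c]
    commutes_if_comm_coeffs_vanish[where c = c and \<Lambda> = \<Lambda>]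
  by (metis (no_types))

lemma comm_coeffs_vanish_if_affine:
  assumes down: "\<forall>k\<in>\<Lambda>. \<forall>l\<le>k. l \<in> \<Lambda>"
    and r: "\<And>\<kappa> m. \<kappa> \<in> \<Lambda> \<Longrightarrow> m \<in> \<Lambda> \<Longrightarrow> r \<kappa> m = real \<kappa> * (\<theta> * real m + \<alpha>)"
    and s: "\<And>\<kappa> m. \<kappa> \<in> \<Lambda> \<Longrightarrow> m \<in> \<Lambda> \<Longrightarrow> s \<kappa> m = real \<kappa> * (\<theta> * real m + \<beta>)"
    and "a \<in> \<Lambda>" "b \<in> \<Lambda>"
  shows "comm_coeff_jump r a b = 0" and "comm_coeff_annih r s a b = 0"
proof -
  have "a - 1 \<in> \<Lambda>" "b - 1 \<in> \<Lambda>"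
    using down \<open>a \<in> \<Lambda>\<close> \<open>b \<in> \<Lambda>\<close> by auto
  then show "comm_coeff_jump r a b = 0" "comm_coeff_annih r s a b = 0"
    using \<open>a \<in> \<Lambda>\<close> \<open>b \<in> \<Lambda>\<close>
    by (cases "a = 0"; cases "b = 0";
        simp add: comm_coeff_jump_def comm_coeff_annih_def r s of_nat_diff algebra_simps)+
qed

lemma rate_linear_if_comm_coeff_jump_vanishes:
  assumes down: "\<forall>k\<in>\<Lambda>. \<forall>l\<le>k. l \<in> \<Lambda>" and "1 \<in> \<Lambda>"
    and jump: "\<And>a. a \<in> \<Lambda> \<Longrightarrow> comm_coeff_jump r a m = 0"
    and "\<kappa> \<in> \<Lambda>"
  shows "r \<kappa> m = real \<kappa> * r 1 m"
  using \<open>\<kappa> \<in> \<Lambda>\<close>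
proof (induction \<kappa>)
  case 0
  show ?case
    using jump[OF \<open>1 \<in> \<Lambda>\<close>] by (simp add: comm_coeff_jump_def)
next
  case (Suc \<kappa>)
  have "\<kappa> \<in> \<Lambda>"
    using down Suc.prems by auto
  have "real \<kappa> * r (Suc \<kappa>) m = real (Suc \<kappa>) * r \<kappa> m"
    using jump[OF Suc.prems] by (simp add: comm_coeff_jump_def)
  also have "\<dots> = real \<kappa> * (real (Suc \<kappa>) * r 1 m)"
    using Suc.IH[OF \<open>\<kappa> \<in> \<Lambda>\<close>] by simp
  finally show ?case
    by (cases "\<kappa> = 0") simp_all
qed

lemma affine_rate_if_comm_coeffs_vanish:
  assumes down: "\<forall>k\<in>\<Lambda>. \<forall>l\<le>k. l \<in> \<Lambda>" and "1 \<in> \<Lambda>"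
    and jump_r: "\<And>a b. a \<in> \<Lambda> \<Longrightarrow> b \<in> \<Lambda> \<Longrightarrow> comm_coeff_jump r a b = 0"
    and jump_s: "\<And>a b. a \<in> \<Lambda> \<Longrightarrow> b \<in> \<Lambda> \<Longrightarrow> comm_coeff_jump s a b = 0"
    and annih: "\<And>b. b \<in> \<Lambda> \<Longrightarrow> comm_coeff_annih r s 1 b = 0"
    and "\<kappa> \<in> \<Lambda>" "m \<in> \<Lambda>"
  shows "r \<kappa> m = real \<kappa> * ((s 1 1 - s 1 0) * real m + r 1 0)"
proof -
  have "0 \<in> \<Lambda>"
    using down \<open>1 \<in> \<Lambda>\<close> by blast
  have linear_r: "r a b = real a * r 1 b" and linear_s: "s a b = real a * s 1 b"
    if "a \<in> \<Lambda>" "b \<in> \<Lambda>" for a b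
    using rate_linear_if_comm_coeff_jump_vanishes[OF down \<open>1 \<in> \<Lambda>\<close>] jump_r jump_s that by blast+
  have increment: "r 1 b - r 1 (b - 1) = s 1 1 - s 1 0" if "b \<in> \<Lambda>" "1 \<le> b" for b
  proof -
    have "b - 1 \<in> \<Lambda>"
      using down that by auto
    have "real b * (r 1 b - r 1 (b - 1) - (s 1 1 - s 1 0)) = comm_coeff_annih r s 1 b"
      using that \<open>b - 1 \<in> \<Lambda>\<close> \<open>0 \<in> \<Lambda>\<close> \<open>1 \<in> \<Lambda>\<close>
      by (simp add: comm_coeff_annih_def linear_r[of 0] linear_s[of b] algebra_simps)
    then show ?thesis
      using annih[OF \<open>b \<in> \<Lambda>\<close>] \<open>1 \<le> b\<close> by simp
  qed
  have "r 1 m = (s 1 1 - s 1 0) * real m + r 1 0"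
    using \<open>m \<in> \<Lambda>\<close>
  proof (induction m)
    case (Suc m)
    then have "m \<in> \<Lambda>"
      using down by auto
    then show ?case
      using Suc.IH increment[OF Suc.prems] by (simp add: algebra_simps)
  qed simp
  then show ?thesis
    using linear_r[OF \<open>\<kappa> \<in> \<Lambda>\<close> \<open>m \<in> \<Lambda>\<close>] by simp
qed

definition edge_pair :: "'v set \<Rightarrow> 'v \<times> 'v" where
  "edge_pair e = (SOME p. fst p \<noteq> snd p \<and> e = {fst p, snd p})"

lemma edge_pair_doubleton:
  assumes "i \<noteq> j"
  shows "edge_pair {i, j} = (i, j) \<or> edge_pair {i, j} = (j, i)"
proof -
  have "fst (edge_pair {i, j}) \<noteq> snd (edge_pair {i, j}) \<and> {i, j} = {fst (edge_pair {i, j}), snd (edge_pair {i, j})}"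
    unfolding edge_pair_def by (rule someI[of _ "(i, j)"]) (simp add: assms)
  then show ?thesis
    by (cases "edge_pair {i, j}") (auto simp: doubleton_eq_iff)
qed

lemma affine_rates_if_comm_coeffs_vanish:
  assumes "0 \<in> \<Lambda>" and down: "\<forall>k\<in>\<Lambda>. \<forall>l\<le>k. l \<in> \<Lambda>"
    and coeffs: "\<forall>i j a b. i \<noteq> j \<longrightarrow> a \<in> \<Lambda> \<longrightarrow> b \<in> \<Lambda> \<longrightarrow>
      comm_coeff_jump (c i j) a b = 0 \<and> comm_coeff_annih (c i j) (c j i) a b = 0"
  shows "\<exists>(\<theta>::'v set \<Rightarrow> real) (\<alpha>::'v \<Rightarrow> 'v \<Rightarrow> real). \<forall>i j \<kappa> m.
    i \<noteq> j \<longrightarrow> \<kappa> \<in> \<Lambda> \<longrightarrow> m \<in> \<Lambda> \<longrightarrow> c i j \<kappa> m = real \<kappa> * (\<theta> {i, j} * real m + \<alpha> i j)"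
proof -
  define t where "t i j = c i j 1 1 - c i j 1 0" for i j
  define \<theta> where "\<theta> e = t (fst (edge_pair e)) (snd (edge_pair e))" for e
  have "c i j \<kappa> m = real \<kappa> * (\<theta> {i, j} * real m + c i j 1 0)"
    if "i \<noteq> j" "\<kappa> \<in> \<Lambda>" "m \<in> \<Lambda>" for i j \<kappa> m
  proof (cases "1 \<in> \<Lambda>")
    case True
    have affine: "c u v k n = real k * (t v u * real n + c u v 1 0)"
      if "u \<noteq> v" "k \<in> \<Lambda>" "n \<in> \<Lambda>" for u v k n
      using affine_rate_if_comm_coeffs_vanish[OF down True, of "c u v" "c v u"] coeffs that True
      by (simp add: t_def)
    have "t i j = t j i"
      using affine[of i j 1 1] \<open>i \<noteq> j\<close> True by (simp add: t_def)
    then have "\<theta> {i, j} = t j i"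
      using edge_pair_doubleton[OF \<open>i \<noteq> j\<close>] by (auto simp: \<theta>_def)
    then show ?thesis
      using affine \<open>i \<noteq> j\<close> that(2,3) by simp
  next
    case False
    then have "\<kappa> = 0" "m = 0"
      using down that(2,3) by (metis One_nat_def not_gr0 less_eq_Suc_le)+
    then show ?thesis
      using coeffs[rule_format, OF \<open>i \<noteq> j\<close> \<open>0 \<in> \<Lambda>\<close> \<open>0 \<in> \<Lambda>\<close>]
      by (simp add: comm_coeff_annih_def)
  qed
  then show ?thesis
    by (intro exI[of _ \<theta>] exI[of _ "\<lambda>i j. c i j 1 0"]) blast
qed

lemma comm_coeffs_vanish_iff_affine_rates:
  fixes c :: "'v \<Rightarrow> 'v \<Rightarrow> nat \<Rightarrow> nat \<Rightarrow> real"
  assumes "0 \<in> \<Lambda>" and down: "\<forall>k\<in>\<Lambda>. \<forall>l\<le>k. l \<in> \<Lambda>"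
  shows "(\<forall>i j a b. i \<noteq> j \<longrightarrow> a \<in> \<Lambda> \<longrightarrow> b \<in> \<Lambda> \<longrightarrow>
      comm_coeff_jump (c i j) a b = 0 \<and> comm_coeff_annih (c i j) (c j i) a b = 0) \<longleftrightarrow>
    (\<exists>(\<theta>::'v set \<Rightarrow> real) (\<alpha>::'v \<Rightarrow> 'v \<Rightarrow> real). \<forall>i j \<kappa> m.
      i \<noteq> j \<longrightarrow> \<kappa> \<in> \<Lambda> \<longrightarrow> m \<in> \<Lambda> \<longrightarrow> c i j \<kappa> m = real \<kappa> * (\<theta> {i, j} * real m + \<alpha> i j))"
    (is "?coeffs \<longleftrightarrow> _")
proof
  assume "\<exists>(\<theta>::'v set \<Rightarrow> real) (\<alpha>::'v \<Rightarrow> 'v \<Rightarrow> real). \<forall>i j \<kappa> m.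
      i \<noteq> j \<longrightarrow> \<kappa> \<in> \<Lambda> \<longrightarrow> m \<in> \<Lambda> \<longrightarrow> c i j \<kappa> m = real \<kappa> * (\<theta> {i, j} * real m + \<alpha> i j)"
  then obtain \<theta> \<alpha> where affine: "\<And>i j \<kappa> m. i \<noteq> j \<Longrightarrow> \<kappa> \<in> \<Lambda> \<Longrightarrow> m \<in> \<Lambda> \<Longrightarrow>
      c i j \<kappa> m = real \<kappa> * (\<theta> {i, j} * real m + \<alpha> i j)"
    by blast
  show ?coeffs
  proof (intro allI impI)
    fix i j :: 'v and a b assume "i \<noteq> j" "a \<in> \<Lambda>" "b \<in> \<Lambda>"
    moreover have "{j, i} = {i, j}"
      by (rule insert_commute)
    ultimately show "comm_coeff_jump (c i j) a b = 0 \<and> comm_coeff_annih (c i j) (c j i) a b = 0"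
      using comm_coeffs_vanish_if_affine[OF down, of "c i j" "\<theta> {i, j}" "\<alpha> i j" "c j i" "\<alpha> j i"] affine
      by (metis (no_types))
  qed
qed (rule affine_rates_if_comm_coeffs_vanish[OF assms])

lemma Ledge_doubleton:
  assumes "i \<noteq> j"
  shows "Ledge c {i, j} = Lij c i j"
  using edge_pair_doubleton[OF assms] Lij_sym[of c j i]
  by (auto simp: Ledge_def edge_pair_def[symmetric])

lemma Aop_sum: "Aop (\<lambda>\<zeta>. \<Sum>e\<in>F. g e \<zeta>) \<eta> = (\<Sum>e\<in>F. Aop (g e) \<eta>)"
  unfolding Aop_def annih_def by (simp add: sum_distrib_left sum.swap[of _ F])

lemma commutes_Lsum:
  assumes "\<And>e. e \<in> F \<Longrightarrow> commutes \<Lambda> (Ledge c e) Aop"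
  shows "commutes \<Lambda> (Lsum c F) Aop"
  using assms by (simp add: commutes_def Lsum_def[abs_def] Aop_sum sum_subtractf)

theorem theorem3p3:
  fixes \<Lambda> :: "nat set"
    and c :: "'v::countable \<Rightarrow> 'v \<Rightarrow> nat \<Rightarrow> nat \<Rightarrow> real"
  assumes "0 \<in> \<Lambda>"
    and "\<forall>k\<in>\<Lambda>. \<forall>l\<le>k. l \<in> \<Lambda>"
  shows "((\<forall>i j. i \<noteq> j \<longrightarrow> commutes \<Lambda> (Lij c i j) Aop) \<longleftrightarrow>
          (\<exists>(\<theta>::'v set \<Rightarrow> real) (\<alpha>::'v \<Rightarrow> 'v \<Rightarrow> real). \<forall>i j \<kappa> m.
              i \<noteq> j \<longrightarrow> \<kappa> \<in> \<Lambda> \<longrightarrow> m \<in> \<Lambda> \<longrightarrow>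
              c i j \<kappa> m = real \<kappa> * (\<theta> {i, j} * real m + \<alpha> i j)))
       \<and> ((\<exists>(\<theta>::'v set \<Rightarrow> real) (\<alpha>::'v \<Rightarrow> 'v \<Rightarrow> real). \<forall>i j \<kappa> m.
              i \<noteq> j \<longrightarrow> \<kappa> \<in> \<Lambda> \<longrightarrow> m \<in> \<Lambda> \<longrightarrow>
              c i j \<kappa> m = real \<kappa> * (\<theta> {i, j} * real m + \<alpha> i j))
          \<longrightarrow> (\<forall>F. finite F \<longrightarrow> F \<subseteq> edges \<longrightarrow> commutes \<Lambda> (Lsum c F) Aop))"
    (is "(?commute \<longleftrightarrow> ?affine) \<and> _")
proof
  show commute_iff_affine: "?commute \<longleftrightarrow> ?affine"
    using all_Lij_sym_iff_comm_coeffs_vanish[OF assms(1), where c = c]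
      comm_coeffs_vanish_iff_affine_rates[OF assms, where c = c]
    by simp
  have "commutes \<Lambda> (Lsum c F) Aop" if ?commute "F \<subseteq> edges" for F
  proof (rule commutes_Lsum)
    fix e assume "e \<in> F"
    then obtain i j where "i \<noteq> j" "e = {i, j}"
      using \<open>F \<subseteq> edges\<close> by (auto simp: edges_def)
    then show "commutes \<Lambda> (Ledge c e) Aop"
      using \<open>?commute\<close> by (simp add: Ledge_doubleton)
  qed
  then show "?affine \<longrightarrow> (\<forall>F. finite F \<longrightarrow> F \<subseteq> edges \<longrightarrow> commutes \<Lambda> (Lsum c F) Aop)"
    using commute_iff_affine by blast
qed

end
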